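(* Let $(\mathcal{U},\mathcal{S},k)$ be a Set Cover instance with $\mathcal{U}=\bigcup_{A\in\mathcal{S}}A$, let $x\ge1$, $0<y\le 1$, and let $\mathcal{G}$ be the fitness graph constructed below, with $n=|V|$. Let $X_1\subseteq V$ be a configuration such that some node $v\in V_2\setminus X_1$ has no in-neighbour in $X_1\cap V_1$ (i.e., $v$ is resident and not covered by the sets in $X_1\cap V_1$). Then, starting from $X_1$, the Heterogeneous Moran process reaches a configuration $X_2$ with $X_2\cap V_1=\emptyset$ with probability at least $\left(\frac{1/n}{1/n+(n-1)y}\right)^{|V_1|}$.
   Context: Construction: $V=V_1\cup V_2$ with $V_1=\mathcal{S}$ and $V_2=\mathcal{U}$; $E=\{(A,v)\in V_1\times V_2: v\in A\}\cup(V_2\times V_1)$; $w(u,v)=1/d(u)$ for $(u,v)\in E$, $d(u)$ the out-degree of $u$. Resident fitness $r\equiv 1$; mutant fitness $m(u)=x$ on $V_1$ and $m(u)=y$ on $V_2$. For a configuration (set of mutants) $X$, $f_X(u)=m(u)$ if $u\in X$, else $r(u)$. The Heterogeneous Moran process: from configuration $X$, pick $u$ with probability $f_X(u)/\sum_v f_X(v)$, then $v$ with probability $w(u,v)$, and $v$ takes the type of $u$. *)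

theory Defs
  imports Complex_Main
begin

definition outdeg :: "('v \<times> 'v) set \<Rightarrow> 'v \<Rightarrow> nat" where
  "outdeg E u = card {v. (u, v) \<in> E}"

definition wt :: "('v \<times> 'v) set \<Rightarrow> 'v \<Rightarrow> 'v \<Rightarrow> real" where
  "wt E u v = (if (u, v) \<in> E then 1 / real (outdeg E u) else 0)"

definition fit :: "('v \<Rightarrow> real) \<Rightarrow> 'v set \<Rightarrow> 'v \<Rightarrow> real" where
  "fit m X u = (if u \<in> X then m u else 1)"

text \<open>Node v takes the type of node u.\<close>
definition upd :: "'v set \<Rightarrow> 'v \<Rightarrow> 'v \<Rightarrow> 'v set" where
  "upd X u v = (if u \<in> X then insert v X else X - {v})"

text \<open>Probability of having entered a target set of configurations T within t steps,
  starting from configuration X. If the chosen reproducer has no out-neighbour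
  the configuration stays unchanged.\<close>
primrec moran_reach ::
  "'v set \<Rightarrow> ('v \<times> 'v) set \<Rightarrow> ('v \<Rightarrow> real) \<Rightarrow> ('v set \<Rightarrow> bool) \<Rightarrow> nat \<Rightarrow> 'v set \<Rightarrow> real" where
  "moran_reach V E m T 0 X = (if T X then 1 else 0)"
| "moran_reach V E m T (Suc t) X =
     (if T X then 1 else
       (\<Sum>u\<in>V. fit m X u / (\<Sum>z\<in>V. fit m X z) *
          ((\<Sum>v\<in>V. wt E u v * moran_reach V E m T t (upd X u v))
           + (if outdeg E u = 0 then moran_reach V E m T t X else 0))))"

definition moran_hit ::
  "'v set \<Rightarrow> ('v \<times> 'v) set \<Rightarrow> ('v \<Rightarrow> real) \<Rightarrow> ('v set \<Rightarrow> bool) \<Rightarrow> 'v set \<Rightarrow> real" where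
  "moran_hit V E m T X = (SUP t. moran_reach V E m T t X)"

definition sc_V1 :: "'a set set \<Rightarrow> ('a set + 'a) set" where
  "sc_V1 S = Inl ` S"

definition sc_V2 :: "'a set \<Rightarrow> ('a set + 'a) set" where
  "sc_V2 U = Inr ` U"

definition sc_V :: "'a set \<Rightarrow> 'a set set \<Rightarrow> ('a set + 'a) set" where
  "sc_V U S = sc_V1 S \<union> sc_V2 U"

definition sc_E :: "'a set \<Rightarrow> 'a set set \<Rightarrow> (('a set + 'a) \<times> ('a set + 'a)) set" where
  "sc_E U S = {(Inl A, Inr v) | A v. A \<in> S \<and> v \<in> A} \<union> (sc_V2 U \<times> sc_V1 S)"

definition sc_mut :: "real \<Rightarrow> real \<Rightarrow> ('a set + 'a) \<Rightarrow> real" where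
  "sc_mut x y u = (case u of Inl _ \<Rightarrow> x | Inr _ \<Rightarrow> y)"

end

theory Submission
  imports Defs
begin

(*
  Fix an element a of U that is uncovered by the mutant sets of X1.  As long as a stays
  resident and no mutant set contains a, put f X = q^|X \<inter> V1| (and f X = 0 once this
  invariant breaks).  Off the target, f has a uniformly positive drift: the resident node a
  reproduces into V1 and lowers |X \<inter> V1| with a gain of at least q^(m-1)(1-q)/|V1|, the
  at most n - 1 mutant nodes of V2 (fitness y) lose at most (n-1) y q^m = q^(m-1)(1-q)/n,
  which is smaller since |V1| < n, and no other reproduction decreases f.  A potential
  bounded by 1 with positive drift off the target bounds the hitting probability from below,
  and f X1 \<ge> q^|V1|.
*)

definition moran_step ::
  "'v set \<Rightarrow> ('v \<times> 'v) set \<Rightarrow> ('v \<Rightarrow> real) \<Rightarrow> ('v set \<Rightarrow> real) \<Rightarrow> 'v set \<Rightarrow> real" where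
  "moran_step V E m g X =
     (\<Sum>u\<in>V. fit m X u / (\<Sum>z\<in>V. fit m X z) *
        ((\<Sum>v\<in>V. wt E u v * g (upd X u v)) + (if outdeg E u = 0 then g X else 0)))"

lemma moran_reach_Suc_step:
  "moran_reach V E m T (Suc t) X = (if T X then 1 else moran_step V E m (moran_reach V E m T t) X)"
  by (simp add: moran_step_def)

lemma wt_nonneg: "0 \<le> wt E u v"
  by (simp add: wt_def)

locale moran_process =
  fixes V :: "'v set" and E :: "('v \<times> 'v) set" and m :: "'v \<Rightarrow> real"
  assumes finite_V: "finite V" and V_nonempty: "V \<noteq> {}"
    and edges_in_V: "E \<subseteq> V \<times> V"
    and fitness_pos: "\<And>u. u \<in> V \<Longrightarrow> 0 < m u"
begin

lemma fit_pos: "u \<in> V \<Longrightarrow> 0 < fit m X u"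
  using fitness_pos by (simp add: fit_def)

lemma total_fit_pos: "0 < (\<Sum>z\<in>V. fit m X z)"
  using finite_V V_nonempty fit_pos by (intro sum_pos) auto

lemma wt_stochastic:
  assumes "u \<in> V"
  shows "(\<Sum>v\<in>V. wt E u v) + (if outdeg E u = 0 then 1 else 0) = 1"
proof -
  let ?out = "{v. (u, v) \<in> E}"
  have out_V: "?out \<subseteq> V" using edges_in_V by blast
  have "(\<Sum>v\<in>V. wt E u v) = (\<Sum>v\<in>V. if v \<in> ?out then 1 / real (outdeg E u) else 0)"
    by (simp add: wt_def)
  also have "\<dots> = (\<Sum>v\<in>V \<inter> ?out. 1 / real (outdeg E u))"
    by (rule sum.inter_restrict[OF finite_V, symmetric])
  also have "\<dots> = real (outdeg E u) * (1 / real (outdeg E u))"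
    using out_V by (simp add: Int_absorb1 outdeg_def)
  finally show ?thesis by auto
qed

lemma sum_wt_le_1: "u \<in> V \<Longrightarrow> (\<Sum>v\<in>V. wt E u v) \<le> 1"
  using wt_stochastic[of u] by (auto split: if_splits)

lemma moran_step_diff_const:
  "moran_step V E m (\<lambda>Y. g Y - c) X = moran_step V E m g X - c"
proof -
  let ?w = "\<lambda>u. fit m X u / (\<Sum>z\<in>V. fit m X z)"
  let ?inner = "\<lambda>u. (\<Sum>v\<in>V. wt E u v * g (upd X u v)) + (if outdeg E u = 0 then g X else 0)"
  have inner: "(\<Sum>v\<in>V. wt E u v * (g (upd X u v) - c)) + (if outdeg E u = 0 then g X - c else 0)
      = ?inner u - c" if "u \<in> V" for u
  proof -
    have "(\<Sum>v\<in>V. wt E u v * (g (upd X u v) - c))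
        = (\<Sum>v\<in>V. wt E u v * g (upd X u v)) - c * (\<Sum>v\<in>V. wt E u v)"
      by (simp add: right_diff_distrib sum_subtractf sum_distrib_left mult.commute)
    then show ?thesis using wt_stochastic[OF that] by (auto simp: algebra_simps)
  qed
  have "moran_step V E m (\<lambda>Y. g Y - c) X = (\<Sum>u\<in>V. ?w u * (?inner u - c))"
    unfolding moran_step_def by (rule sum.cong[OF refl]) (simp add: inner)
  also have "\<dots> = (\<Sum>u\<in>V. ?w u * ?inner u) - c * (\<Sum>u\<in>V. ?w u)"
    by (simp add: right_diff_distrib sum_subtractf sum_distrib_left mult.commute)
  also have "(\<Sum>u\<in>V. ?w u) = 1"
    using total_fit_pos[of X] by (simp add: sum_divide_distrib[symmetric])
  finally show ?thesis by (simp add: moran_step_def)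
qed

lemma moran_step_const: "moran_step V E m (\<lambda>_. c) X = c"
proof -
  have "moran_step V E m (\<lambda>_. 0) X = 0"
    by (simp add: moran_step_def)
  then show ?thesis
    using moran_step_diff_const[of "\<lambda>_. 0" "- c" X] by simp
qed

lemma moran_step_mono:
  assumes "\<And>Y. g Y \<le> h Y"
  shows "moran_step V E m g X \<le> moran_step V E m h X"
  unfolding moran_step_def
proof (intro sum_mono mult_left_mono add_mono)
  fix u assume "u \<in> V"
  then show "0 \<le> fit m X u / (\<Sum>z\<in>V. fit m X z)"
    using total_fit_pos[of X] fit_pos[of u X] by simp
qed (auto simp: assms wt_nonneg mult_left_mono)

lemma moran_step_minus_self:
  "moran_step V E m g X - g X =
     (\<Sum>u\<in>V. fit m X u / (\<Sum>z\<in>V. fit m X z) * (\<Sum>v\<in>V. wt E u v * (g (upd X u v) - g X)))"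
proof -
  have "moran_step V E m g X - g X = moran_step V E m (\<lambda>Y. g Y - g X) X"
    by (simp add: moran_step_diff_const)
  also have "\<dots> = (\<Sum>u\<in>V. fit m X u / (\<Sum>z\<in>V. fit m X z) *
      (\<Sum>v\<in>V. wt E u v * (g (upd X u v) - g X)))"
    unfolding moran_step_def by (rule sum.cong) simp_all
  finally show ?thesis .
qed

lemma moran_reach_bounds: "0 \<le> moran_reach V E m T t X \<and> moran_reach V E m T t X \<le> 1"
proof (induction t arbitrary: X)
  case (Suc t)
  then have "moran_step V E m (\<lambda>_. 0) X \<le> moran_step V E m (moran_reach V E m T t) X"
    and "moran_step V E m (moran_reach V E m T t) X \<le> moran_step V E m (\<lambda>_. 1) X"
    by (auto intro!: moran_step_mono)
  then show ?case unfolding moran_reach_Suc_step by (simp add: moran_step_const)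
qed simp

lemma moran_reach_le_hit: "moran_reach V E m T t X \<le> moran_hit V E m T X"
  unfolding moran_hit_def
  by (rule cSUP_upper) (auto intro: bdd_aboveI[of _ 1] simp: moran_reach_bounds)

lemma moran_reach_ge_by_drift:
  assumes le_1: "\<And>Y. f Y \<le> 1" and "0 \<le> \<eta>"
    and drift: "\<And>Y. \<not> T Y \<Longrightarrow> 0 < f Y \<Longrightarrow> f Y + \<eta> \<le> moran_step V E m f Y"
  shows "f X - max 0 (1 - \<eta> * real t) \<le> moran_reach V E m T t X"
proof (induction t arbitrary: X)
  case 0
  show ?case using le_1[of X] moran_reach_bounds[of T 0 X] by simp
next
  case (Suc t)
  consider "T X" | "f X \<le> 0" | "\<not> T X" "0 < f X" by linarith
  then show ?case
  proof cases
    case 1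
    then show ?thesis using le_1[of X] by simp
  next
    case 2
    then show ?thesis using moran_reach_bounds[of T "Suc t" X] by linarith
  next
    case 3
    have "f X + \<eta> - max 0 (1 - \<eta> * real t)
        \<le> moran_step V E m (\<lambda>Y. f Y - max 0 (1 - \<eta> * real t)) X"
      using drift[OF 3] by (simp add: moran_step_diff_const)
    also have "\<dots> \<le> moran_reach V E m T (Suc t) X"
      using 3 Suc unfolding moran_reach_Suc_step by (simp add: moran_step_mono)
    finally show ?thesis using \<open>0 \<le> \<eta>\<close> by (simp add: algebra_simps)
  qed
qed

lemma moran_hit_ge_by_drift:
  assumes "\<And>Y. f Y \<le> 1" and "0 < \<eta>"
    and "\<And>Y. \<not> T Y \<Longrightarrow> 0 < f Y \<Longrightarrow> f Y + \<eta> \<le> moran_step V E m f Y"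
  shows "f X \<le> moran_hit V E m T X"
proof -
  define t where "t = nat \<lceil>1 / \<eta>\<rceil>"
  have "1 / \<eta> \<le> real t"
    unfolding t_def by linarith
  then have "1 \<le> \<eta> * real t"
    using \<open>0 < \<eta>\<close> by (simp add: field_simps)
  then have "f X \<le> moran_reach V E m T t X"
    using moran_reach_ge_by_drift[of f \<eta> T X t] assms by simp
  also have "\<dots> \<le> moran_hit V E m T X"
    by (rule moran_reach_le_hit)
  finally show ?thesis .
qed

end

lemma finite_sc_V: "finite U \<Longrightarrow> U = \<Union>S \<Longrightarrow> finite (sc_V U S)"
  using finite_UnionD[of S] by (simp add: sc_V_def sc_V1_def sc_V2_def)

lemma card_sc_V:
  assumes "finite U" and "U = \<Union>S"
  shows "card (sc_V U S) = card (sc_V1 S) + card U"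
proof -
  have "finite S" using assms finite_UnionD by blast
  then show ?thesis
    using \<open>finite U\<close> unfolding sc_V_def sc_V1_def sc_V2_def
    by (subst card_Un_disjoint) (auto simp: card_image)
qed

lemma sc_E_subset: "U = \<Union>S \<Longrightarrow> sc_E U S \<subseteq> sc_V U S \<times> sc_V U S"
  by (auto simp: sc_E_def sc_V_def sc_V1_def sc_V2_def)

lemma sc_E_Inl_iff: "(Inl A, w) \<in> sc_E U S \<longleftrightarrow> A \<in> S \<and> (\<exists>b\<in>A. w = Inr b)"
  by (auto simp: sc_E_def sc_V1_def sc_V2_def)

lemma sc_out_neighbours_Inr: "b \<in> U \<Longrightarrow> {v. (Inr b, v) \<in> sc_E U S} = sc_V1 S"
  by (auto simp: sc_E_def sc_V1_def sc_V2_def)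

locale set_cover_uncovered =
  fixes U :: "'a set" and S :: "'a set set" and x y :: real and a :: 'a
  assumes finite_U: "finite U" and U_eq_Union: "U = \<Union>S"
    and x_ge_1: "1 \<le> x" and y_pos: "0 < y" and y_le_1: "y \<le> 1"
    and a_in_U: "a \<in> U"
begin

abbreviation "V \<equiv> sc_V U S"
abbreviation "V1 \<equiv> sc_V1 S"
abbreviation "V2 \<equiv> sc_V2 U"
abbreviation "E \<equiv> sc_E U S"
abbreviation "n \<equiv> card V"
abbreviation "N \<equiv> card V1"

sublocale moran_process V E "sc_mut x y"
proof
  show "finite V" using finite_U U_eq_Union by (rule finite_sc_V)
  show "V \<noteq> {}" using a_in_U by (auto simp: sc_V_def sc_V2_def)
  show "E \<subseteq> V \<times> V" using U_eq_Union by (rule sc_E_subset)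
  show "0 < sc_mut x y u" for u
    using x_ge_1 y_pos by (simp add: sc_mut_def split: sum.split)
qed

lemma finite_V1: "finite V1"
  using finite_V by (simp add: sc_V_def)

lemma N_ge_1: "1 \<le> N"
proof -
  obtain A where "A \<in> S" using a_in_U U_eq_Union by blast
  then have "V1 \<noteq> {}" by (auto simp: sc_V1_def)
  then show ?thesis using finite_V1 by (simp add: Suc_le_eq card_gt_0_iff)
qed

lemma N_less_n: "N < n"
  using card_sc_V[OF finite_U U_eq_Union] a_in_U finite_U by (auto simp: card_gt_0_iff)

lemma total_fit_le: "(\<Sum>z\<in>V. fit (sc_mut x y) X z) \<le> real n * x"
proof -
  have "fit (sc_mut x y) X z \<le> x" for z
    using x_ge_1 y_le_1 by (simp add: fit_def sc_mut_def split: sum.split)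
  then show ?thesis using sum_mono[of V _ "\<lambda>_. x"] by simp
qed

definition q :: real where
  "q = (1 / real n) / (1 / real n + (real n - 1) * y)"

lemma q_pos: "0 < q"
  and q_less_1: "q < 1"
  and q_balance: "q * (real n - 1) * y = (1 - q) / real n"
proof -
  let ?D = "1 / real n + (real n - 1) * y"
  have n_ge_2: "2 \<le> real n" using N_ge_1 N_less_n by linarith
  then have "0 < 1 / real n" "1 / real n < ?D" using y_pos by simp_all
  then have "0 < ?D" by linarith
  show "0 < q" unfolding q_def using \<open>0 < 1 / real n\<close> \<open>0 < ?D\<close> by (rule divide_pos_pos)
  show "q < 1" unfolding q_def using \<open>1 / real n < ?D\<close> \<open>0 < ?D\<close> by (simp only: divide_less_eq_1_pos)
  have "q * ?D = 1 / real n"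
    using \<open>0 < ?D\<close> unfolding q_def by simp
  then show "q * (real n - 1) * y = (1 - q) / real n"
    by (simp add: algebra_simps diff_divide_distrib)
qed

definition drift :: real where
  "drift = q ^ N * (1 - q) * (1 / real N - 1 / real n) / (real n * x)"

lemma drift_pos: "0 < drift"
proof -
  have "1 / real n < 1 / real N"
    using N_ge_1 N_less_n by (intro divide_strict_left_mono) auto
  then show ?thesis
    unfolding drift_def using q_pos q_less_1 x_ge_1 N_less_n
    by (intro divide_pos_pos mult_pos_pos) auto
qed

lemma drift_le_balance:
  assumes "1 \<le> m" "m \<le> N" "k \<le> n - 1" "0 < F" "F \<le> real n * x"
  shows "drift \<le> (real m * (q ^ (m - 1) - q ^ m) / real N - real k * y * q ^ m) / F"
proof -
  let ?G = "q ^ (m - 1) * ((1 - q) * (1 / real N - 1 / real n))"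
  have q_m: "q ^ m = q * q ^ (m - 1)"
    using \<open>1 \<le> m\<close> by (simp add: power_eq_if)
  have gap: "0 \<le> (1 - q) * (1 / real N - 1 / real n)"
    using q_less_1 N_ge_1 N_less_n by (intro mult_nonneg_nonneg) (auto intro: divide_left_mono)
  have "drift \<le> ?G / (real n * x)"
    unfolding drift_def mult.assoc using \<open>m \<le> N\<close> q_pos q_less_1 gap x_ge_1 N_less_n
    by (intro divide_right_mono mult_right_mono power_decreasing) auto
  also have "\<dots> \<le> ?G / F"
    using assms(4,5) gap q_pos by (intro divide_left_mono) auto
  also have "?G \<le> real m * (q ^ (m - 1) - q ^ m) / real N - real k * y * q ^ m"
  proof -
    have "real k * y * q ^ m \<le> (real n - 1) * y * q ^ m"
      using assms(3) N_less_n y_pos q_pos by (intro mult_right_mono) auto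
    also have "\<dots> = q ^ (m - 1) * (q * (real n - 1) * y)"
      by (simp add: q_m algebra_simps)
    also have "\<dots> = q ^ (m - 1) * ((1 - q) / real n)"
      by (simp only: q_balance)
    finally have loss: "real k * y * q ^ m \<le> q ^ (m - 1) * ((1 - q) / real n)" .
    have step: "q ^ (m - 1) * (1 - q) = q ^ (m - 1) - q ^ m"
      by (simp add: q_m algebra_simps)
    moreover have "0 \<le> q ^ (m - 1) * (1 - q)"
      using q_pos q_less_1 by simp
    ultimately have "0 \<le> q ^ (m - 1) - q ^ m"
      by simp
    then have "q ^ (m - 1) * (1 - q) \<le> real m * (q ^ (m - 1) - q ^ m)"
      using \<open>1 \<le> m\<close> step mult_right_mono[of 1 "real m"] by simp
    then have gain: "q ^ (m - 1) * (1 - q) / real N \<le> real m * (q ^ (m - 1) - q ^ m) / real N"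
      by (simp add: divide_right_mono)
    show ?thesis using loss gain by (simp add: right_diff_distrib)
  qed
  then have "?G / F \<le> (real m * (q ^ (m - 1) - q ^ m) / real N - real k * y * q ^ m) / F"
    using \<open>0 < F\<close> by (simp add: divide_right_mono)
  finally show ?thesis .
qed

definition keeps_uncovered :: "('a set + 'a) set \<Rightarrow> bool" where
  "keeps_uncovered X \<longleftrightarrow> X \<subseteq> V \<and> Inr a \<notin> X \<and> (\<forall>A. Inl A \<in> X \<longrightarrow> a \<notin> A)"

definition potential :: "('a set + 'a) set \<Rightarrow> real" where
  "potential X = (if keeps_uncovered X then q ^ card (X \<inter> V1) else 0)"

lemma potential_nonneg: "0 \<le> potential X"
  using q_pos by (simp add: potential_def)

lemma potential_le_1: "potential X \<le> 1"
  using q_pos q_less_1 by (simp add: potential_def power_le_one)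

lemma keeps_uncovered_Diff: "keeps_uncovered X \<Longrightarrow> keeps_uncovered (X - {v})"
  by (auto simp: keeps_uncovered_def)

lemma potential_le_upd:
  assumes kX: "keeps_uncovered X" and uv: "(u, v) \<in> E" and u: "u \<notin> X \<inter> V2"
  shows "potential X \<le> potential (upd X u v)"
proof (cases "u \<in> X")
  case False
  then have "upd X u v = X - {v}" by (simp add: upd_def)
  moreover have "card ((X - {v}) \<inter> V1) \<le> card (X \<inter> V1)"
    using finite_V1 by (intro card_mono) auto
  ultimately show ?thesis
    using kX keeps_uncovered_Diff q_pos q_less_1 by (simp add: potential_def power_decreasing)
next
  case True
  with u uv obtain A where A: "u = Inl A"
    by (cases u) (auto simp: sc_E_def sc_V2_def)
  with uv obtain b where b: "A \<in> S" "b \<in> A" "v = Inr b"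
    by (auto simp: sc_E_Inl_iff)
  have "a \<notin> A" using kX True A by (simp add: keeps_uncovered_def)
  moreover have "v \<in> V" using b U_eq_Union by (auto simp: sc_V_def sc_V2_def)
  ultimately have "keeps_uncovered (insert v X)"
    using kX b by (auto simp: keeps_uncovered_def)
  moreover have "insert v X \<inter> V1 = X \<inter> V1"
    using b by (auto simp: sc_V1_def)
  ultimately show ?thesis
    using kX True by (simp add: upd_def potential_def)
qed

lemma potential_increment_uncovered:
  assumes kX: "keeps_uncovered X"
  shows "(\<Sum>v\<in>V. wt E (Inr a) v * (potential (upd X (Inr a) v) - potential X))
    = real (card (X \<inter> V1)) * (q ^ (card (X \<inter> V1) - 1) - q ^ card (X \<inter> V1)) / real N"
proof -
  let ?m = "card (X \<inter> V1)"
  let ?d = "(q ^ (?m - 1) - q ^ ?m) / real N"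
  have wt_a: "wt E (Inr a) v = (if v \<in> V1 then 1 / real N else 0)" for v
  proof -
    have "{v. (Inr a, v) \<in> E} = V1" by (rule sc_out_neighbours_Inr[OF a_in_U])
    then show ?thesis by (auto simp: wt_def outdeg_def)
  qed
  have summand: "wt E (Inr a) v * (potential (upd X (Inr a) v) - potential X)
      = (if v \<in> X \<inter> V1 then ?d else 0)" for v
  proof -
    have upd: "upd X (Inr a) v = X - {v}"
      using kX by (simp add: upd_def keeps_uncovered_def)
    have "card ((X - {v}) \<inter> V1) = ?m - 1" if "v \<in> X \<inter> V1"
      using that finite_V1 by (simp add: Int_Diff[symmetric] Diff_Int_distrib2)
    then show ?thesis
      using kX keeps_uncovered_Diff[OF kX, of v] unfolding wt_a upd
      by (auto simp: potential_def)
  qed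
  have "(\<Sum>v\<in>V. if v \<in> X \<inter> V1 then ?d else 0) = (\<Sum>v\<in>V \<inter> (X \<inter> V1). ?d)"
    by (rule sum.inter_restrict[OF finite_V, symmetric])
  also have "V \<inter> (X \<inter> V1) = X \<inter> V1" by (auto simp: sc_V_def)
  finally show ?thesis by (simp add: summand)
qed

lemma potential_drift:
  assumes kX: "keeps_uncovered X" and "X \<inter> V1 \<noteq> {}"
  shows "potential X + drift \<le> moran_step V E (sc_mut x y) potential X"
proof -
  define m where "m = card (X \<inter> V1)"
  define k where "k = card (X \<inter> V2)"
  define F where "F = (\<Sum>z\<in>V. fit (sc_mut x y) X z)"
  let ?w = "\<lambda>u. fit (sc_mut x y) X u / F"
  let ?\<Delta> = "\<lambda>u. \<Sum>v\<in>V. wt E u v * (potential (upd X u v) - potential X)"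
  have XV: "X \<subseteq> V" and a_res: "Inr a \<notin> X" using kX by (simp_all add: keeps_uncovered_def)
  have pot_X: "potential X = q ^ m" using kX by (simp add: potential_def m_def)
  have F_pos: "0 < F" unfolding F_def by (rule total_fit_pos)
  have w_nonneg: "0 \<le> ?w u" if "u \<in> V" for u
    using fit_pos[OF that, of X] F_pos by simp
  have \<Delta>_nonneg: "0 \<le> ?\<Delta> u" if "u \<notin> X \<inter> V2" for u
    using potential_le_upd[OF kX _ that] by (intro sum_nonneg) (auto simp: wt_def)
  have \<Delta>_mutant: "- (q ^ m) \<le> ?\<Delta> u" if "u \<in> X \<inter> V2" for u
  proof -
    have "- (q ^ m) \<le> (\<Sum>v\<in>V. wt E u v) * (- (q ^ m))"
      using sum_wt_le_1[of u] that XV q_pos by (auto simp: mult_le_cancel_right1)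
    also have "\<dots> \<le> ?\<Delta> u"
      unfolding sum_distrib_right pot_X
      using potential_nonneg by (intro sum_mono mult_left_mono) (auto simp: wt_nonneg)
    finally show ?thesis .
  qed
  have fit_mutant: "fit (sc_mut x y) X u = y" if "u \<in> X \<inter> V2" for u
    using that by (auto simp: fit_def sc_mut_def sc_V2_def)
  have "1 \<le> m" "m \<le> N"
    using \<open>X \<inter> V1 \<noteq> {}\<close> finite_V1 by (auto simp: m_def Suc_le_eq card_gt_0_iff card_mono)
  moreover have "k \<le> n - 1"
  proof -
    have "X \<inter> V2 \<subseteq> V - {Inr a}" using XV a_res by auto
    moreover have "Inr a \<in> V" using a_in_U by (simp add: sc_V_def sc_V2_def)
    ultimately show ?thesis
      unfolding k_def using finite_V by (metis card_Diff_singleton card_mono finite_Diff)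
  qed
  ultimately have "drift \<le> (real m * (q ^ (m - 1) - q ^ m) / real N - real k * y * q ^ m) / F"
    using F_pos total_fit_le[of X] by (intro drift_le_balance) (simp_all add: F_def)
  also have "\<dots> = ?w (Inr a) * ?\<Delta> (Inr a) + (\<Sum>u\<in>X \<inter> V2. ?w u * (- (q ^ m)))"
    using potential_increment_uncovered[OF kX] a_res fit_mutant
    by (simp add: fit_def m_def k_def diff_divide_distrib ac_simps)
  also have "\<dots> \<le> ?w (Inr a) * ?\<Delta> (Inr a) + (\<Sum>u\<in>X \<inter> V2. ?w u * ?\<Delta> u)"
    using w_nonneg XV \<Delta>_mutant by (intro add_left_mono sum_mono mult_left_mono) auto
  also have "\<dots> = (\<Sum>u\<in>insert (Inr a) (X \<inter> V2). ?w u * ?\<Delta> u)"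
    using finite_V XV a_res by (subst sum.insert) (auto intro: finite_subset)
  also have "\<dots> \<le> (\<Sum>u\<in>V. ?w u * ?\<Delta> u)"
  proof (rule sum_mono2[OF finite_V])
    show "insert (Inr a) (X \<inter> V2) \<subseteq> V"
      using XV a_in_U by (auto simp: sc_V_def sc_V2_def)
    show "0 \<le> ?w u * ?\<Delta> u" if "u \<in> V - insert (Inr a) (X \<inter> V2)" for u
      using that by (intro mult_nonneg_nonneg w_nonneg \<Delta>_nonneg) auto
  qed
  also have "\<dots> = moran_step V E (sc_mut x y) potential X - potential X"
    unfolding F_def by (rule moran_step_minus_self[symmetric])
  finally show ?thesis by simp
qed

lemma potential_le_moran_hit:
  "potential X \<le> moran_hit V E (sc_mut x y) (\<lambda>X. X \<inter> V1 = {}) X"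
proof (rule moran_hit_ge_by_drift[OF potential_le_1 drift_pos])
  fix Y assume "\<not> Y \<inter> V1 = {}" and "0 < potential Y"
  then show "potential Y + drift \<le> moran_step V E (sc_mut x y) potential Y"
    by (intro potential_drift) (auto simp: potential_def split: if_splits)
qed

lemma power_N_le_potential: "keeps_uncovered X \<Longrightarrow> q ^ N \<le> potential X"
  using finite_V1 q_pos q_less_1 by (simp add: potential_def power_decreasing card_mono)

end

theorem lemma3:
  fixes U :: "'a set" and S :: "'a set set" and k :: nat and x y :: real
    and X1 :: "('a set + 'a) set"
  assumes "finite U" and "U = \<Union> S"
    and "x \<ge> 1" and "0 < y" and "y \<le> 1"
    and "X1 \<subseteq> sc_V U S"
    and "\<exists>v \<in> sc_V2 U - X1. \<not> (\<exists>u \<in> X1 \<inter> sc_V1 S. (u, v) \<in> sc_E U S)"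
  shows "((1 / real (card (sc_V U S))) /
            (1 / real (card (sc_V U S)) + (real (card (sc_V U S)) - 1) * y))
           ^ card (sc_V1 S)
         \<le> moran_hit (sc_V U S) (sc_E U S) (sc_mut x y) (\<lambda>X. X \<inter> sc_V1 S = {}) X1"
proof -
  obtain a where a: "a \<in> U" "Inr a \<notin> X1"
    and uncovered: "\<not> (\<exists>u \<in> X1 \<inter> sc_V1 S. (u, Inr a) \<in> sc_E U S)"
    using assms(7) by (auto simp: sc_V2_def)
  interpret set_cover_uncovered U S x y a
    using assms a by unfold_locales auto
  have "keeps_uncovered X1"
    unfolding keeps_uncovered_def
  proof (intro conjI allI impI)
    fix A assume "Inl A \<in> X1"
    with assms(6) have "Inl A \<in> X1 \<inter> sc_V1 S" by (auto simp: sc_V_def sc_V1_def sc_V2_def)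
    with uncovered show "a \<notin> A" by (auto simp: sc_E_def sc_V1_def)
  qed (use assms(6) a in auto)
  then have "q ^ N \<le> potential X1" by (rule power_N_le_potential)
  also have "\<dots> \<le> moran_hit V E (sc_mut x y) (\<lambda>X. X \<inter> V1 = {}) X1"
    by (rule potential_le_moran_hit)
  finally show ?thesis by (simp add: q_def)
qed

end
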